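(* Let $k\ge3$ and let $\{H_{r_1},\dots,H_{r_k}\}$ be a set of pairwise parallel hyperplanes in $\mathbb{H}^n$ (pairwise distinct and disjoint in $\mathbb{H}^n$). Suppose all $H_{r_i}$ have a common ideal point $\xi\in\partial\mathbb{H}^n$, and that the group $D\subseteq\mathrm{Iso}(\mathbb{H}^n)$ generated by the reflections $r_i$ across $H_{r_i}$ is a discrete subgroup. Then $D$ is isomorphic to the infinite dihedral group $D_\infty$.
   Context: $\partial\mathbb{H}^n$ is the visual boundary of hyperbolic $n$-space; an ideal point of a hyperplane is an endpoint of a geodesic ray contained in it. *)

theory Defs
  imports "HOL-Analysis.Analysis" "HOL-Algebra.Bij" "HOL-Algebra.Generated_Groups"
begin

text \<open>Hyperboloid model of hyperbolic n-space, n = DIM('a), inside R^n x R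
  with the Lorentzian form of signature (n,1).\<close>

definition lor :: "('a::euclidean_space \<times> real) \<Rightarrow> ('a \<times> real) \<Rightarrow> real" where
  "lor p q = fst p \<bullet> fst q - snd p * snd q"

definition hyp :: "('a::euclidean_space \<times> real) set" where
  "hyp = {p. lor p p = -1 \<and> snd p > 0}"

definition hdist :: "('a::euclidean_space \<times> real) \<Rightarrow> ('a \<times> real) \<Rightarrow> real" where
  "hdist p q = arcosh (- lor p q)"

definition hplane :: "('a::euclidean_space \<times> real) \<Rightarrow> ('a \<times> real) set" where
  "hplane v = {p \<in> hyp. lor p v = 0}"

definition hrefl :: "('a::euclidean_space \<times> real) \<Rightarrow> ('a \<times> real) \<Rightarrow> ('a \<times> real)" where
  "hrefl v = (\<lambda>p \<in> hyp. p - (2 * lor p v / lor v v) *\<^sub>R v)"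

definition geodesic_ray :: "(real \<Rightarrow> ('a::euclidean_space \<times> real)) \<Rightarrow> bool" where
  "geodesic_ray \<gamma> \<longleftrightarrow> (\<forall>t\<ge>0. \<gamma> t \<in> hyp) \<and>
     (\<forall>s\<ge>0. \<forall>t\<ge>0. hdist (\<gamma> s) (\<gamma> t) = \<bar>s - t\<bar>)"

text \<open>Two rays define the same point of the visual boundary iff they stay at bounded distance.\<close>
definition asymptotic :: "(real \<Rightarrow> ('a::euclidean_space \<times> real)) \<Rightarrow> (real \<Rightarrow> ('a \<times> real)) \<Rightarrow> bool" where
  "asymptotic \<gamma> \<delta> \<longleftrightarrow> (\<exists>C. \<forall>t\<ge>0. hdist (\<gamma> t) (\<delta> t) \<le> C)"

definition has_ideal_point :: "('a::euclidean_space \<times> real) set \<Rightarrow> (real \<Rightarrow> ('a \<times> real)) \<Rightarrow> bool" where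
  "has_ideal_point S \<gamma> \<longleftrightarrow>
     (\<exists>\<delta>. geodesic_ray \<delta> \<and> (\<forall>t\<ge>0. \<delta> t \<in> S) \<and> asymptotic \<delta> \<gamma>)"

text \<open>Discreteness of a set of isometries (maps extensional on H^n) in the compact-open
  topology of Iso(H^n).\<close>
definition discrete_isos :: "(('a::euclidean_space \<times> real) \<Rightarrow> ('a \<times> real)) set \<Rightarrow> bool" where
  "discrete_isos D \<longleftrightarrow> (\<forall>g\<in>D. \<exists>K e. compact K \<and> K \<subseteq> hyp \<and> e > 0 \<and>
      (\<forall>h\<in>D. h \<noteq> g \<longrightarrow> (\<exists>x\<in>K. hdist (h x) (g x) \<ge> e)))"

text \<open>The infinite dihedral group Z \<rtimes> Z/2: pairs (e,m), e = \<plusminus>1, acting on Z by x \<mapsto> e*x + m.\<close>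
definition DInf :: "(int \<times> int) monoid" where
  "DInf = \<lparr>carrier = {(e, m). e = 1 \<or> e = -1},
           mult = (\<lambda>(e1, m1) (e2, m2). (e1 * e2, m1 + e1 * m2)),
           one = (1, 0)\<rparr>"

definition refl_group :: "nat \<Rightarrow> (nat \<Rightarrow> ('a::euclidean_space \<times> real)) \<Rightarrow> (('a \<times> real) \<Rightarrow> ('a \<times> real)) set" where
  "refl_group k v = generate (BijGroup hyp) {hrefl (v i) | i. i < k}"

end

theory Submission
  imports Defs
begin

text \<open>In the hyperboloid model the common ideal point is a null direction u, to which every normal
  vector v i is Lorentz-orthogonal. Two disjoint hyperplanes orthogonal to u have unit normals
  differing by a multiple of u, so all normals are, up to scale, w + c i u for one unit vector w.
  Reflections in such hyperplanes compose to parabolic translations T (2 (c i - c j)) fixing the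
  ideal point, and the group they generate consists of translations T m and reflections R c only.
  Discreteness keeps the translation lengths away from 0, so they form a lattice d\<int>, and
  (1, n) \<mapsto> T (n d), (-1, n) \<mapsto> R (c 0 + n d / 2) is an isomorphism from D\<infinity>.\<close>

section \<open>The Lorentzian form\<close>

lemma lor_commute: "lor p q = lor q p"
  by (simp add: lor_def inner_commute mult.commute)

lemma lor_add_left [simp]: "lor (p + q) r = lor p r + lor q r"
  and lor_add_right [simp]: "lor r (p + q) = lor r p + lor r q"
  and lor_diff_left [simp]: "lor (p - q) r = lor p r - lor q r"
  and lor_diff_right [simp]: "lor r (p - q) = lor r p - lor r q"
  and lor_scaleR_left [simp]: "lor (c *\<^sub>R p) r = c * lor p r"
  and lor_scaleR_right [simp]: "lor r (c *\<^sub>R p) = c * lor r p"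
  and lor_minus_left [simp]: "lor (- p) r = - lor p r"
  and lor_minus_right [simp]: "lor r (- p) = - lor r p"
  and lor_zero_left [simp]: "lor 0 r = 0"
  and lor_zero_right [simp]: "lor r 0 = 0"
  by (simp_all add: lor_def algebra_simps)

lemma tendsto_lor [tendsto_intros]:
  "(f \<longlongrightarrow> a) F \<Longrightarrow> (g \<longlongrightarrow> b) F \<Longrightarrow> ((\<lambda>x. lor (f x) (g x)) \<longlongrightarrow> lor a b) F"
  unfolding lor_def by (intro tendsto_intros)

lemma abs_lor_le: "\<bar>lor p q\<bar> \<le> 2 * norm p * norm q"
proof -
  have "\<bar>fst p \<bullet> fst q\<bar> \<le> norm (fst p) * norm (fst q)"
    by (rule Cauchy_Schwarz_ineq2)
  also have "\<dots> \<le> norm p * norm q"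
    using norm_fst_le[of "fst p" "snd p"] norm_fst_le[of "fst q" "snd q"]
    by (intro mult_mono) simp_all
  finally have "\<bar>fst p \<bullet> fst q\<bar> \<le> norm p * norm q" .
  moreover have "\<bar>snd p * snd q\<bar> \<le> norm p * norm q"
    using norm_snd_le[of "snd p" "fst p"] norm_snd_le[of "snd q" "fst q"]
    by (simp add: abs_mult mult_mono)
  ultimately show ?thesis
    unfolding lor_def by linarith
qed

section \<open>The hyperboloid\<close>

lemma hyp_fst_inner: "p \<in> hyp \<Longrightarrow> fst p \<bullet> fst p = (snd p)\<^sup>2 - 1"
  by (simp add: hyp_def lor_def power2_eq_square)

lemma hyp_snd_ge_1: assumes "p \<in> hyp" shows "snd p \<ge> 1"
proof -
  have "1 \<le> (snd p)\<^sup>2"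
    using hyp_fst_inner[OF assms] inner_ge_zero[of "fst p"] by simp
  then show ?thesis
    using assms power2_le_imp_le[of 1 "snd p"] by (auto simp: hyp_def)
qed

text \<open>Reversed Cauchy--Schwarz inequality for timelike vectors.\<close>
lemma hyp_lor_le: assumes "p \<in> hyp" "q \<in> hyp" shows "lor p q \<le> -1"
proof -
  let ?s = "snd p" and ?t = "snd q"
  have s: "?s \<ge> 1" and t: "?t \<ge> 1"
    using hyp_snd_ge_1 assms by blast+
  have "(fst p \<bullet> fst q)\<^sup>2 \<le> (?s\<^sup>2 - 1) * (?t\<^sup>2 - 1)"
    using Cauchy_Schwarz_ineq[of "fst p" "fst q"] hyp_fst_inner[OF assms(1)]
      hyp_fst_inner[OF assms(2)] by simp
  also have "\<dots> \<le> (?s * ?t - 1)\<^sup>2"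
  proof -
    have "(?s * ?t - 1)\<^sup>2 - (?s\<^sup>2 - 1) * (?t\<^sup>2 - 1) = (?s - ?t)\<^sup>2"
      by (simp add: power2_eq_square algebra_simps)
    then show ?thesis
      using zero_le_power2[of "?s - ?t"] by linarith
  qed
  finally have "\<bar>fst p \<bullet> fst q\<bar> \<le> ?s * ?t - 1"
    using s t mult_mono[of 1 ?s 1 ?t] power2_le_imp_le[of "\<bar>fst p \<bullet> fst q\<bar>" "?s * ?t - 1"]
    by simp
  then show ?thesis
    by (simp add: lor_def)
qed

lemma hyp_or_uminus_hyp: assumes "lor p p = -1" shows "p \<in> hyp \<or> - p \<in> hyp"
proof -
  have "(snd p)\<^sup>2 = fst p \<bullet> fst p + 1"
    using assms by (simp add: lor_def power2_eq_square)
  then have "(snd p)\<^sup>2 > 0"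
    using inner_ge_zero[of "fst p"] by linarith
  then have "snd p \<noteq> 0"
    by auto
  then show ?thesis
    using assms by (auto simp: hyp_def)
qed

lemma in_hyp_if_lor_neg:
  assumes "p \<in> hyp" "lor q q = -1" "lor p q < 0" shows "q \<in> hyp"
proof (rule ccontr)
  assume "q \<notin> hyp"
  then have "lor p (- q) \<le> -1"
    using hyp_or_uminus_hyp[OF assms(2)] hyp_lor_le[OF assms(1)] by blast
  then show False
    using assms(3) by simp
qed

lemma hdist_nonneg: "p \<in> hyp \<Longrightarrow> q \<in> hyp \<Longrightarrow> 0 \<le> hdist p q"
  using hyp_lor_le[of p q] by (simp add: hdist_def)

lemma cosh_hdist: "p \<in> hyp \<Longrightarrow> q \<in> hyp \<Longrightarrow> cosh (hdist p q) = - lor p q"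
  using hyp_lor_le[of p q] by (simp add: hdist_def)

lemma hdist_le_iff:
  "p \<in> hyp \<Longrightarrow> q \<in> hyp \<Longrightarrow> 0 \<le> C \<Longrightarrow> hdist p q \<le> C \<longleftrightarrow> - lor p q \<le> cosh C"
  by (metis cosh_hdist cosh_real_nonneg_le_iff hdist_nonneg)

lemma origin_in_hyp: "(0, 1) \<in> hyp"
  by (simp add: hyp_def lor_def)

lemma hyp_norm_le: assumes "p \<in> hyp" shows "norm p \<le> 2 * snd p"
proof -
  have "(norm p)\<^sup>2 = fst p \<bullet> fst p + (snd p)\<^sup>2"
    unfolding power2_norm_eq_inner by (simp add: inner_prod_def power2_eq_square)
  also have "\<dots> \<le> 4 * (snd p)\<^sup>2"
    using hyp_fst_inner[OF assms] zero_le_power2[of "snd p"] by linarith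
  also have "\<dots> = (2 * snd p)\<^sup>2"
    by (simp add: power_mult_distrib)
  finally have "(norm p)\<^sup>2 \<le> (2 * snd p)\<^sup>2" .
  then show ?thesis
    by (rule power2_le_imp_le) (use hyp_snd_ge_1[OF assms] in simp)
qed

lemma hyp_snd_le: assumes "p \<in> hyp" "q \<in> hyp" shows "snd q \<le> 2 * snd p * (- lor p q)"
proof -
  let ?s = "snd p" and ?t = "snd q"
  have s: "?s \<ge> 1" and t: "?t \<ge> 1"
    using hyp_snd_ge_1 assms by blast+
  have "(norm (fst p) * (2 * ?s))\<^sup>2 = (?s\<^sup>2 - 1) * (4 * ?s\<^sup>2)"
    using hyp_fst_inner[OF assms(1)] by (simp add: power_mult_distrib power2_norm_eq_inner)
  also have "\<dots> \<le> (2 * ?s\<^sup>2 - 1)\<^sup>2"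
  proof -
    have "(2 * ?s\<^sup>2 - 1)\<^sup>2 - (?s\<^sup>2 - 1) * (4 * ?s\<^sup>2) = 1"
      by (simp add: power2_eq_square algebra_simps)
    then show ?thesis
      by linarith
  qed
  finally have "(norm (fst p) * (2 * ?s))\<^sup>2 \<le> (2 * ?s\<^sup>2 - 1)\<^sup>2" .
  moreover have "0 \<le> 2 * ?s\<^sup>2 - 1"
    using s one_le_power[of ?s 2] by linarith
  ultimately have a: "norm (fst p) * (2 * ?s) \<le> 2 * ?s\<^sup>2 - 1"
    by (rule power2_le_imp_le)
  have "(norm (fst q))\<^sup>2 \<le> ?t\<^sup>2"
    using hyp_fst_inner[OF assms(2)] by (simp add: power2_norm_eq_inner)
  then have "norm (fst q) \<le> ?t"
    using power2_le_imp_le t by simp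
  then have "fst p \<bullet> fst q \<le> norm (fst p) * ?t"
    using norm_cauchy_schwarz[of "fst p" "fst q"] by (meson mult_left_mono norm_ge_zero order_trans)
  then have "2 * ?s * (fst p \<bullet> fst q) \<le> (norm (fst p) * (2 * ?s)) * ?t"
    using s by (simp add: mult_left_mono algebra_simps)
  also have "\<dots> \<le> (2 * ?s\<^sup>2 - 1) * ?t"
    using a t by (simp add: mult_right_mono)
  finally show ?thesis
    by (simp add: lor_def power2_eq_square algebra_simps)
qed

lemma hrefl_apply: "p \<in> hyp \<Longrightarrow> hrefl v p = p - (2 * lor p v / lor v v) *\<^sub>R v"
  by (simp add: hrefl_def)

lemma hrefl_scaleR: "c \<noteq> 0 \<Longrightarrow> hrefl (c *\<^sub>R v) = hrefl v"
  unfolding hrefl_def by (rule restrict_ext) simp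

lemma hplane_scaleR: "c \<noteq> 0 \<Longrightarrow> hplane (c *\<^sub>R v) = hplane v"
  by (auto simp: hplane_def)

lemma hrefl_in_hyp:
  assumes "lor v v > 0" "p \<in> hyp" shows "hrefl v p \<in> hyp"
proof -
  define a where "a = 2 * lor p v / lor v v"
  have aL: "a * lor v v = 2 * lor p v"
    using assms(1) by (simp add: a_def)
  have "lor (p - a *\<^sub>R v) (p - a *\<^sub>R v) = lor p p - a * (2 * lor p v) + a * (a * lor v v)"
    by (simp add: lor_commute[of v p] algebra_simps)
  also have "\<dots> = -1"
    using assms(2) aL by (simp add: hyp_def)
  finally have "lor (p - a *\<^sub>R v) (p - a *\<^sub>R v) = -1" .
  moreover have "lor p (p - a *\<^sub>R v) < 0"
  proof -
    have "a * lor p v \<ge> 0"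
      using assms(1) by (simp add: a_def)
    then show ?thesis
      using assms(2) by (simp add: hyp_def)
  qed
  ultimately show ?thesis
    using in_hyp_if_lor_neg[OF assms(2)] assms(2) by (simp add: hrefl_apply a_def)
qed

lemma hrefl_hrefl:
  assumes "lor v v > 0" "p \<in> hyp" shows "hrefl v (hrefl v p) = p"
  using assms hrefl_in_hyp[OF assms] by (simp add: hrefl_apply)

lemma hrefl_in_Bij: assumes "lor v v > 0" shows "hrefl v \<in> Bij hyp"
proof -
  have "bij_betw (hrefl v) hyp hyp"
    by (rule bij_betwI[where g = "hrefl v"]) (auto simp: hrefl_in_hyp[OF assms] hrefl_hrefl[OF assms])
  then show ?thesis
    by (simp add: Bij_def hrefl_def)
qed

section \<open>Null vectors\<close>

lemma null_snd_nonzero: assumes "lor u u = 0" "u \<noteq> 0" shows "snd u \<noteq> 0"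
proof
  assume "snd u = 0"
  then have "fst u = 0"
    using assms(1) by (simp add: lor_def)
  then show False
    using \<open>snd u = 0\<close> assms(2) by (simp add: prod_eq_iff)
qed

lemma lor_self_nonneg_if_orthogonal_null:
  assumes "lor u u = 0" "u \<noteq> 0" "lor x u = 0" shows "0 \<le> lor x x"
proof -
  have uu: "fst u \<bullet> fst u = (snd u)\<^sup>2"
    using assms(1) by (simp add: lor_def power2_eq_square)
  have "(snd x * snd u)\<^sup>2 \<le> (fst x \<bullet> fst x) * (snd u)\<^sup>2"
    using Cauchy_Schwarz_ineq[of "fst x" "fst u"] assms(3) uu by (simp add: lor_def)
  then have "(snd x)\<^sup>2 \<le> fst x \<bullet> fst x"
    using null_snd_nonzero[OF assms(1,2)] by (simp add: power_mult_distrib)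
  then show ?thesis
    by (simp add: lor_def power2_eq_square)
qed

lemma hyp_lor_null_nonzero:
  assumes "lor u u = 0" "u \<noteq> 0" "p \<in> hyp" shows "lor p u \<noteq> 0"
  using lor_self_nonneg_if_orthogonal_null[OF assms(1,2), of p] assms(3) by (auto simp: hyp_def)

lemma null_orthogonal_null_parallel:
  assumes "lor u u = 0" "u \<noteq> 0" "lor y u = 0" "lor y y = 0" shows "\<exists>c. y = c *\<^sub>R u"
proof -
  define z where "z = y - (snd y / snd u) *\<^sub>R u"
  have "snd z = 0"
    using null_snd_nonzero[OF assms(1,2)] by (simp add: z_def)
  moreover have "lor z z = 0"
    using assms by (simp add: z_def lor_commute[of u y])
  ultimately have "z = 0"
    by (simp add: lor_def prod_eq_iff)
  then show ?thesis
    by (auto simp: z_def)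
qed

lemma hplane_inter_nonempty:
  assumes xx: "lor x x = 1" and yy: "lor y y = 1" and xy: "\<bar>lor x y\<bar> < 1"
  shows "hplane x \<inter> hplane y \<noteq> {}"
proof -
  define z where "z = y - lor x y *\<^sub>R x"
  have zx: "lor z x = 0"
    using xx by (simp add: z_def lor_commute[of y x])
  have "lor z z = 1 - (lor x y)\<^sup>2"
    using xx yy by (simp add: z_def lor_commute[of y x] algebra_simps power2_eq_square)
  then have zz: "lor z z > 0"
    using xy by (simp add: abs_square_less_1)
  \<comment> \<open>project the origin of the hyperboloid onto the orthogonal complement of x and z\<close>
  define q :: "'a \<times> real" where "q = (0, 1)"
  define p where "p = q - lor q x *\<^sub>R x - (lor q z / lor z z) *\<^sub>R z"
  have px: "lor p x = 0" and pz: "lor p z = 0"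
    using xx zx zz by (simp_all add: p_def lor_commute[of x z])
  have "y = z + lor x y *\<^sub>R x"
    by (simp add: z_def)
  then have py: "lor p y = 0"
    using px pz by (metis add_0 lor_add_right lor_scaleR_right mult_zero_right)
  have "lor p p = lor q p"
    using px pz by (subst (1) p_def) (simp add: lor_commute[of x p] lor_commute[of z p])
  also have "\<dots> = -1 - (lor q x)\<^sup>2 - (lor q z)\<^sup>2 / lor z z"
    by (simp add: p_def q_def lor_def power2_eq_square)
  finally have "lor p p = -1 - (lor q x)\<^sup>2 - (lor q z)\<^sup>2 / lor z z" .
  moreover have "(lor q z)\<^sup>2 / lor z z \<ge> 0"
    using zz by simp
  ultimately have pp: "lor p p < 0"
    using zero_le_power2[of "lor q x"] by linarith
  define r where "r = (1 / sqrt (- lor p p)) *\<^sub>R p"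
  have rr: "lor r r = -1"
    using pp by (simp add: r_def power2_eq_square[symmetric])
  have "lor r x = 0" "lor r y = 0"
    using px py by (simp_all add: r_def)
  with hyp_or_uminus_hyp[OF rr] show ?thesis
    by (auto simp: hplane_def)
qed

section \<open>Ideal points\<close>

lemma cosh_ray: "geodesic_ray \<gamma> \<Longrightarrow> 0 \<le> t \<Longrightarrow> cosh t = - lor (\<gamma> 0) (\<gamma> t)"
  using cosh_hdist[of "\<gamma> 0" "\<gamma> t"] by (simp add: geodesic_ray_def)

text \<open>Rescaled points of a ray accumulate at null vectors, which represent its ideal point.\<close>
definition rescaled_ray :: "(real \<Rightarrow> ('a::euclidean_space \<times> real)) \<Rightarrow> nat \<Rightarrow> 'a \<times> real" where
  "rescaled_ray \<gamma> n = \<gamma> (real n) /\<^sub>R cosh (real n)"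

lemma bounded_rescaled_ray: assumes "geodesic_ray \<gamma>" shows "bounded (range (rescaled_ray \<gamma>))"
proof -
  have "norm (rescaled_ray \<gamma> n) \<le> 4 * snd (\<gamma> 0)" for n
  proof -
    have hyp: "\<gamma> 0 \<in> hyp" "\<gamma> (real n) \<in> hyp"
      using assms by (auto simp: geodesic_ray_def)
    have "norm (\<gamma> (real n)) \<le> 2 * snd (\<gamma> (real n))"
      by (rule hyp_norm_le[OF hyp(2)])
    also have "\<dots> \<le> 4 * snd (\<gamma> 0) * cosh (real n)"
      using hyp_snd_le[OF hyp] cosh_ray[OF assms, of "real n"] by simp
    finally show ?thesis
      by (simp add: rescaled_ray_def field_simps)
  qed
  then show ?thesis
    by (auto simp: bounded_iff)
qed

lemma inverse_cosh_subseq_tendsto_0: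
  "strict_mono r \<Longrightarrow> (\<lambda>n. inverse (cosh (real (r n)))) \<longlonglongrightarrow> 0"
  by (intro tendsto_inverse_0_at_top filterlim_compose[OF cosh_real_at_top]
      filterlim_compose[OF filterlim_real_sequentially] filterlim_subseq)

lemma rescaled_ray_limit_null:
  assumes ray: "geodesic_ray \<gamma>" and r: "strict_mono r" and lim: "(rescaled_ray \<gamma> \<circ> r) \<longlonglongrightarrow> u"
  shows "lor u u = 0" and "lor (\<gamma> 0) u = -1"
proof -
  have "(\<lambda>n. - (inverse (cosh (real (r n))))\<^sup>2) \<longlonglongrightarrow> - 0\<^sup>2"
    by (rule tendsto_minus[OF tendsto_power[OF inverse_cosh_subseq_tendsto_0[OF r]]])
  moreover have "lor (rescaled_ray \<gamma> n) (rescaled_ray \<gamma> n) = - (inverse (cosh (real n)))\<^sup>2" for n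
    using ray by (simp add: rescaled_ray_def geodesic_ray_def hyp_def power2_eq_square)
  ultimately have "(\<lambda>n. lor ((rescaled_ray \<gamma> \<circ> r) n) ((rescaled_ray \<gamma> \<circ> r) n)) \<longlonglongrightarrow> 0"
    by simp
  moreover have "(\<lambda>n. lor ((rescaled_ray \<gamma> \<circ> r) n) ((rescaled_ray \<gamma> \<circ> r) n)) \<longlonglongrightarrow> lor u u"
    using lim by (intro tendsto_intros)
  ultimately show "lor u u = 0"
    by (rule LIMSEQ_unique[symmetric])
  have "lor (\<gamma> 0) (rescaled_ray \<gamma> n) = -1" for n
    using cosh_ray[OF ray, of "real n"] cosh_real_pos[of "real n"]
    by (simp add: rescaled_ray_def field_simps)
  then have "(\<lambda>n. lor (\<gamma> 0) ((rescaled_ray \<gamma> \<circ> r) n)) \<longlonglongrightarrow> -1"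
    by simp
  moreover have "(\<lambda>n. lor (\<gamma> 0) ((rescaled_ray \<gamma> \<circ> r) n)) \<longlonglongrightarrow> lor (\<gamma> 0) u"
    using lim by (intro tendsto_intros)
  ultimately show "lor (\<gamma> 0) u = -1"
    by (rule LIMSEQ_unique[symmetric])
qed

lemma asymptotic_rescaled_limits_orthogonal:
  assumes "geodesic_ray \<gamma>" "geodesic_ray \<delta>" "asymptotic \<delta> \<gamma>" "strict_mono r"
    and "(rescaled_ray \<gamma> \<circ> r) \<longlonglongrightarrow> u" "(rescaled_ray \<delta> \<circ> r) \<longlonglongrightarrow> w"
  shows "lor w u = 0"
proof -
  obtain C where C: "\<And>t. 0 \<le> t \<Longrightarrow> hdist (\<delta> t) (\<gamma> t) \<le> C"
    using assms(3) by (auto simp: asymptotic_def)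
  have hyp: "\<delta> t \<in> hyp" "\<gamma> t \<in> hyp" if "0 \<le> t" for t
    using assms(1,2) that by (auto simp: geodesic_ray_def)
  have "0 \<le> hdist (\<delta> 0) (\<gamma> 0)"
    using hdist_nonneg[OF hyp[OF order_refl]] .
  then have "0 \<le> C"
    using C[of 0] by linarith
  have abs_lor: "\<bar>lor (\<delta> t) (\<gamma> t)\<bar> \<le> cosh C" if "0 \<le> t" for t
  proof -
    have "- lor (\<delta> t) (\<gamma> t) \<le> cosh C"
      using hdist_le_iff[OF hyp[OF that] \<open>0 \<le> C\<close>] C[OF that] by simp
    moreover have "lor (\<delta> t) (\<gamma> t) \<le> -1"
      using hyp_lor_le[OF hyp[OF that]] .
    ultimately show ?thesis
      unfolding abs_le_iff using cosh_real_pos[of C] by linarith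
  qed
  have bound: "\<bar>lor (rescaled_ray \<delta> n) (rescaled_ray \<gamma> n)\<bar> \<le> (inverse (cosh (real n)))\<^sup>2 * cosh C"
    for n
  proof -
    have "\<bar>lor (rescaled_ray \<delta> n) (rescaled_ray \<gamma> n)\<bar>
        = (inverse (cosh (real n)))\<^sup>2 * \<bar>lor (\<delta> (real n)) (\<gamma> (real n))\<bar>"
      by (simp add: rescaled_ray_def abs_mult power2_eq_square)
    also have "\<dots> \<le> (inverse (cosh (real n)))\<^sup>2 * cosh C"
      using abs_lor[of "real n"] by (simp add: mult_left_mono)
    finally show ?thesis .
  qed
  have "(\<lambda>n. (inverse (cosh (real (r n))))\<^sup>2 * cosh C) \<longlonglongrightarrow> 0\<^sup>2 * cosh C"
    by (rule tendsto_mult[OF tendsto_power[OF inverse_cosh_subseq_tendsto_0[OF assms(4)]] tendsto_const])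
  then have "(\<lambda>n. (inverse (cosh (real (r n))))\<^sup>2 * cosh C) \<longlonglongrightarrow> 0"
    by simp
  then have "(\<lambda>n. lor ((rescaled_ray \<delta> \<circ> r) n) ((rescaled_ray \<gamma> \<circ> r) n)) \<longlonglongrightarrow> 0"
    by (rule Lim_null_comparison[OF always_eventually, rotated]) (simp add: bound)
  moreover have "(\<lambda>n. lor ((rescaled_ray \<delta> \<circ> r) n) ((rescaled_ray \<gamma> \<circ> r) n)) \<longlonglongrightarrow> lor w u"
    using assms(5,6) by (intro tendsto_intros)
  ultimately show ?thesis
    by (rule LIMSEQ_unique[symmetric])
qed

lemma ideal_point_orthogonal:
  assumes ray: "geodesic_ray \<xi>" and ideal: "has_ideal_point (hplane v) \<xi>"
    and r: "strict_mono r" and lim: "(rescaled_ray \<xi> \<circ> r) \<longlonglongrightarrow> u"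
  shows "lor u v = 0"
proof -
  obtain \<delta> where \<delta>: "geodesic_ray \<delta>" "\<And>t. 0 \<le> t \<Longrightarrow> \<delta> t \<in> hplane v" "asymptotic \<delta> \<xi>"
    using ideal by (auto simp: has_ideal_point_def)
  have "bounded (range (rescaled_ray \<delta> \<circ> r))"
    using bounded_rescaled_ray[OF \<delta>(1)] by (rule bounded_subset) auto
  then obtain w r' where r': "strict_mono r'" and w: "(rescaled_ray \<delta> \<circ> (r \<circ> r')) \<longlonglongrightarrow> w"
    using bounded_imp_convergent_subsequence by (metis comp_assoc)
  have rr': "strict_mono (r \<circ> r')"
    using r r' by (rule strict_mono_o)
  have u: "(rescaled_ray \<xi> \<circ> (r \<circ> r')) \<longlonglongrightarrow> u"
    using LIMSEQ_subseq_LIMSEQ[OF lim r'] by (simp add: comp_assoc)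
  have uu: "lor u u = 0" and u0: "u \<noteq> 0"
    using rescaled_ray_limit_null[OF ray r lim] by auto
  have ww: "lor w w = 0" and w0: "w \<noteq> 0"
    using rescaled_ray_limit_null[OF \<delta>(1) rr' w] by auto
  have wu: "lor w u = 0"
    using asymptotic_rescaled_limits_orthogonal[OF ray \<delta>(1,3) rr' u w] .
  obtain c where c: "w = c *\<^sub>R u"
    using null_orthogonal_null_parallel[OF uu u0 wu ww] by blast
  have "lor (rescaled_ray \<delta> n) v = 0" for n
    using \<delta>(2)[of "real n"] by (simp add: rescaled_ray_def hplane_def)
  then have "(\<lambda>n. lor ((rescaled_ray \<delta> \<circ> (r \<circ> r')) n) v) \<longlonglongrightarrow> 0"
    by simp
  moreover have "(\<lambda>n. lor ((rescaled_ray \<delta> \<circ> (r \<circ> r')) n) v) \<longlonglongrightarrow> lor w v"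
    using w by (intro tendsto_intros)
  ultimately have "lor w v = 0"
    by (rule LIMSEQ_unique[symmetric])
  then show ?thesis
    using c w0 by simp
qed

lemma ideal_point_null_vector:
  assumes "geodesic_ray \<xi>"
  obtains u where "lor u u = 0" "u \<noteq> 0" "\<And>v. has_ideal_point (hplane v) \<xi> \<Longrightarrow> lor u v = 0"
proof -
  obtain u r where r: "strict_mono r" and lim: "(rescaled_ray \<xi> \<circ> r) \<longlonglongrightarrow> u"
    using bounded_imp_convergent_subsequence[OF bounded_rescaled_ray[OF assms]] by blast
  show ?thesis
    using that rescaled_ray_limit_null[OF assms r lim] ideal_point_orthogonal[OF assms _ r lim]
    by fastforce
qed

section \<open>Groups\<close>

lemma carrier_BijGroup: "carrier (BijGroup S) = Bij S"
  by (simp add: BijGroup_def)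

lemma BijGroup_mult_eq: "f \<in> Bij S \<Longrightarrow> g \<in> Bij S \<Longrightarrow> f \<otimes>\<^bsub>BijGroup S\<^esub> g = (\<lambda>x\<in>S. f (g x))"
  by (simp add: BijGroup_def compose_def)

lemma discrete_real_subgroup_least_positive:
  fixes L :: "real set"
  assumes diff: "\<And>a b. a \<in> L \<Longrightarrow> b \<in> L \<Longrightarrow> a - b \<in> L"
    and x: "x \<in> L" "x \<noteq> 0" and gap: "\<delta> > 0" "\<And>a. a \<in> L \<Longrightarrow> a \<noteq> 0 \<Longrightarrow> \<delta> \<le> \<bar>a\<bar>"
  obtains d where "d \<in> L" "d > 0" "\<And>a. a \<in> L \<Longrightarrow> 0 < a \<Longrightarrow> d \<le> a"
proof -
  define S where "S = {a \<in> L. a > 0}"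
  have "x - x \<in> L"
    using diff[OF x(1) x(1)] .
  then have "\<bar>x\<bar> \<in> S"
    using x diff[of 0 x] by (cases "x \<ge> 0") (auto simp: S_def)
  then have S_ne: "S \<noteq> {}"
    by auto
  have "\<delta> \<le> a" if "a \<in> S" for a
    using gap(2) that by (fastforce simp: S_def)
  then have bdd: "bdd_below S"
    by (auto simp: bdd_below_def)
  define d where "d = Inf S"
  have d_le: "d \<le> a" if "a \<in> S" for a
    unfolding d_def using bdd that by (rule cInf_lower[rotated])
  text \<open>The infimum is attained: two elements of S closer than \<delta> would have a difference in L
    that is too small.\<close>
  have "d \<in> S"
  proof (rule ccontr)
    assume "d \<notin> S"
    obtain a1 where a1: "a1 \<in> S" "a1 < d + \<delta>"
      using cInf_less_iff[OF S_ne bdd, of "d + \<delta>"] gap(1) by (auto simp: d_def)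
    moreover have "d \<noteq> a1"
      using a1(1) \<open>d \<notin> S\<close> by blast
    ultimately have "d < a1"
      using d_le[OF a1(1)] by linarith
    then obtain a2 where a2: "a2 \<in> S" "a2 < a1"
      using cInf_less_iff[OF S_ne bdd] by (auto simp: d_def)
    have "a1 - a2 \<in> L" "a1 - a2 \<noteq> 0" "\<bar>a1 - a2\<bar> < \<delta>"
      using a1 a2 d_le[OF a2(1)] diff by (auto simp: S_def)
    then show False
      using gap(2) by fastforce
  qed
  then show ?thesis
    using that d_le by (auto simp: S_def)
qed

lemma real_subgroup_eq_multiples:
  fixes L :: "real set"
  assumes diff: "\<And>a b. a \<in> L \<Longrightarrow> b \<in> L \<Longrightarrow> a - b \<in> L"
    and d: "d \<in> L" "d > 0" and least: "\<And>a. a \<in> L \<Longrightarrow> 0 < a \<Longrightarrow> d \<le> a"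
  shows "L = range (\<lambda>n::int. of_int n * d)"
proof -
  have zero: "0 \<in> L"
    using diff[OF d(1) d(1)] by simp
  have uminus: "- a \<in> L" if "a \<in> L" for a
    using diff[OF zero that] by simp
  have nat_multiples: "of_nat k * d \<in> L" for k :: nat
  proof (induction k)
    case (Suc k)
    then show ?case
      using diff[OF Suc uminus[OF d(1)]] by (simp add: algebra_simps)
  qed (simp add: zero)
  have multiples: "of_int n * d \<in> L" for n :: int
  proof (cases "n \<ge> 0")
    case True
    then show ?thesis
      using nat_multiples[of "nat n"] by simp
  next
    case False
    then show ?thesis
      using uminus[OF nat_multiples[of "nat (- n)"]] by simp
  qed
  have "a \<in> range (\<lambda>n::int. of_int n * d)" if a: "a \<in> L" for a
  proof -
    define n where "n = \<lfloor>a / d\<rfloor>"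
    have "a - of_int n * d \<in> L"
      using diff[OF a multiples] .
    moreover have "0 \<le> a - of_int n * d" "a - of_int n * d < d"
      using d(2) floor_divide_lower[OF d(2), of a] floor_divide_upper[OF d(2), of a]
      by (simp_all add: n_def algebra_simps)
    ultimately have "a = of_int n * d"
      using least[of "a - of_int n * d"] by fastforce
    then show ?thesis
      by blast
  qed
  then show ?thesis
    using multiples by auto
qed

lemma group_DInf: "group DInf"
proof (rule groupI)
  fix x assume "x \<in> carrier DInf"
  then show "\<exists>y\<in>carrier DInf. y \<otimes>\<^bsub>DInf\<^esub> x = \<one>\<^bsub>DInf\<^esub>"
    by (intro bexI[of _ "(fst x, - fst x * snd x)"]) (auto simp: DInf_def)
qed (auto simp: DInf_def algebra_simps)

section \<open>Hyperplanes through a common ideal point\<close>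

locale parabolic_frame =
  fixes w u :: "'a::euclidean_space \<times> real"
  assumes lor_w_w: "lor w w = 1" and lor_u_u: "lor u u = 0" and lor_w_u: "lor w u = 0"
    and u_nonzero: "u \<noteq> 0"
begin

lemma lor_u_w: "lor u w = 0"
  using lor_w_u by (simp add: lor_commute)

lemmas lor_frame [simp] = lor_w_w lor_u_u lor_w_u lor_u_w

lemma parallel_hplane_normal_form:
  assumes vv: "lor v v > 0" and vu: "lor v u = 0" and disj: "hplane v \<inter> hplane w = {}"
  obtains l c where "l \<noteq> 0" "v = l *\<^sub>R (w + c *\<^sub>R u)"
proof -
  define s where "s = sqrt (lor v v)"
  have s: "s > 0" "s * s = lor v v"
    using vv by (simp_all add: s_def)
  define x where "x = (1 / s) *\<^sub>R v"
  have v: "v = s *\<^sub>R x"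
    using s(1) by (simp add: x_def)
  have xx: "lor x x = 1" and xu: "lor x u = 0"
    using s vv vu by (simp_all add: x_def)
  define a where "a = lor x w"
  have "0 \<le> lor (x - w) (x - w)" "0 \<le> lor (x + w) (x + w)"
    by (rule lor_self_nonneg_if_orthogonal_null[OF lor_u_u u_nonzero], simp add: xu)+
  then have "\<bar>a\<bar> \<le> 1"
    using xx lor_w_w by (simp add: a_def lor_commute[of w x])
  moreover have "\<not> \<bar>a\<bar> < 1"
    using hplane_inter_nonempty[OF xx lor_w_w] disj s(1) by (auto simp: a_def v hplane_scaleR)
  ultimately have aa: "a * a = 1"
    by (cases "a \<ge> 0") (auto simp: abs_if)
  have "lor (x - a *\<^sub>R w) (x - a *\<^sub>R w) = 0"
    using xx lor_w_w aa by (simp add: a_def lor_commute[of w x] algebra_simps)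
  moreover have "lor (x - a *\<^sub>R w) u = 0"
    using xu lor_w_u by simp
  ultimately obtain \<mu> where "x - a *\<^sub>R w = \<mu> *\<^sub>R u"
    using null_orthogonal_null_parallel[OF lor_u_u u_nonzero] by blast
  then have "v = (s * a) *\<^sub>R (w + (a * \<mu>) *\<^sub>R u)"
    using aa by (simp add: v eq_diff_eq scaleR_add_right algebra_simps)
  moreover have "s * a \<noteq> 0"
    using s aa by auto
  ultimately show ?thesis
    using that by blast
qed

text \<open>R c is the reflection in a hyperplane through the ideal point of u, and T m is the parabolic
  translation R (m / 2) \<circ> R 0 fixing that ideal point, written out explicitly.\<close>
definition R :: "real \<Rightarrow> ('a \<times> real) \<Rightarrow> ('a \<times> real)" where
  "R c = hrefl (w + c *\<^sub>R u)"

definition T :: "real \<Rightarrow> ('a \<times> real) \<Rightarrow> ('a \<times> real)" where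
  "T m = (\<lambda>p\<in>hyp. p + (- m * lor p u) *\<^sub>R w + (m * lor p w - m\<^sup>2 / 2 * lor p u) *\<^sub>R u)"

lemma parallel_reflection:
  assumes "lor v v > 0" "lor v u = 0" "hplane v \<inter> hplane w = {}"
  obtains c where "hrefl v = R c" "hplane v = hplane (w + c *\<^sub>R u)"
proof -
  obtain l c where "l \<noteq> 0" "v = l *\<^sub>R (w + c *\<^sub>R u)"
    using parallel_hplane_normal_form[OF assms] .
  then show ?thesis
    using that by (simp add: R_def hrefl_scaleR hplane_scaleR)
qed

lemma R_in_Bij: "R c \<in> Bij hyp"
  unfolding R_def by (rule hrefl_in_Bij) simp

lemma R_in_hyp: "p \<in> hyp \<Longrightarrow> R c p \<in> hyp"
  unfolding R_def by (rule hrefl_in_hyp) simp_all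

lemma R_R: "p \<in> hyp \<Longrightarrow> R c (R c p) = p"
  unfolding R_def by (rule hrefl_hrefl) simp_all

lemma R_apply:
  "p \<in> hyp \<Longrightarrow> R c p = p + (-2 * (lor p w + c * lor p u)) *\<^sub>R w + (c * (-2 * (lor p w + c * lor p u))) *\<^sub>R u"
  unfolding R_def by (simp add: hrefl_apply algebra_simps)

lemma T_apply: "p \<in> hyp \<Longrightarrow> T m p = p + (- m * lor p u) *\<^sub>R w + (m * lor p w - m\<^sup>2 / 2 * lor p u) *\<^sub>R u"
  by (simp add: T_def)

lemma R_R_eq_T: assumes "p \<in> hyp" shows "R a (R b p) = T (2 * (a - b)) p"
proof -
  define A where "A = -2 * (lor p w + b * lor p u)"
  define B where "B = -2 * (lor p w + A + a * lor p u)"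
  have Rb: "R b p = p + A *\<^sub>R w + (b * A) *\<^sub>R u"
    using R_apply[OF assms] by (simp add: A_def)
  have "lor (p + A *\<^sub>R w + (b * A) *\<^sub>R u) w = lor p w + A"
    and "lor (p + A *\<^sub>R w + (b * A) *\<^sub>R u) u = lor p u"
    by simp_all
  then have "R a (R b p) = (p + A *\<^sub>R w + (b * A) *\<^sub>R u) + B *\<^sub>R w + (a * B) *\<^sub>R u"
    using R_apply[OF R_in_hyp[OF assms, of b], of a] unfolding Rb B_def by simp
  also have "\<dots> = p + (A + B) *\<^sub>R w + (b * A + a * B) *\<^sub>R u"
    by (simp add: algebra_simps)
  moreover have "A + B = - (2 * (a - b)) * lor p u"
    and "b * A + a * B = 2 * (a - b) * lor p w - (2 * (a - b))\<^sup>2 / 2 * lor p u"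
    by (simp_all add: A_def B_def power2_eq_square field_simps)
  ultimately show ?thesis
    by (simp only: T_apply[OF assms])
qed

lemma T_in_hyp: assumes "p \<in> hyp" shows "T m p \<in> hyp"
proof -
  have "T m p = R (m / 2) (R 0 p)"
    using R_R_eq_T[OF assms, of "m / 2" 0] by simp
  then show ?thesis
    using R_in_hyp[OF R_in_hyp[OF assms]] by simp
qed

lemma T_R: assumes "p \<in> hyp" shows "T m (R c p) = R (c + m / 2) p"
  using R_R_eq_T[OF R_in_hyp[OF assms, of c], of "c + m / 2" c] R_R[OF assms] by simp

lemma R_T: assumes "p \<in> hyp" shows "R c (T m p) = R (c - m / 2) p"
  using R_R_eq_T[OF assms, of c "c - m / 2", symmetric] R_R[OF R_in_hyp[OF assms]] by simp

lemma T_T: assumes "p \<in> hyp" shows "T a (T b p) = T (a + b) p"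
proof -
  have "T a (T b p) = T a (R 0 (R (- b / 2) p))"
    using R_R_eq_T[OF assms, of 0 "- b / 2"] by simp
  also have "\<dots> = R (a / 2) (R (- b / 2) p)"
    using T_R[OF R_in_hyp[OF assms]] by simp
  also have "\<dots> = T (a + b) p"
    using R_R_eq_T[OF assms] by (simp add: algebra_simps)
  finally show ?thesis .
qed

lemma cosh_hdist_T: assumes "p \<in> hyp" shows "cosh (hdist (T m p) p) = 1 + m\<^sup>2 / 2 * (lor p u)\<^sup>2"
proof -
  have "lor (T m p) p = -1 - m\<^sup>2 / 2 * (lor p u)\<^sup>2"
    using assms
    by (simp add: T_apply hyp_def lor_commute[of w p] lor_commute[of u p] algebra_simps power2_eq_square)
  then show ?thesis
    using cosh_hdist[OF T_in_hyp[OF assms] assms] by simp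
qed

lemma T_fixpoint: assumes "p \<in> hyp" "T m p = p" shows "m = 0"
proof -
  have "cosh (hdist (T m p) p) = 1"
    using assms cosh_hdist[of p p] by (simp add: hyp_def)
  then show ?thesis
    using cosh_hdist_T[OF assms(1)] hyp_lor_null_nonzero[OF lor_u_u u_nonzero assms(1)] by simp
qed

lemma T_zero: "p \<in> hyp \<Longrightarrow> T 0 p = p"
  by (simp add: T_apply)

lemma T_extensional: "T m \<in> extensional hyp"
  by (simp add: T_def)

lemma R_extensional: "R c \<in> extensional hyp"
  by (simp add: R_def hrefl_def)

lemma R_mult_R: "R a \<otimes>\<^bsub>BijGroup hyp\<^esub> R b = T (2 * (a - b))"
  unfolding BijGroup_mult_eq[OF R_in_Bij R_in_Bij]
  by (rule extensionalityI[OF restrict_extensional T_extensional]) (simp add: R_R_eq_T)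

lemma T_in_Bij: "T m \<in> Bij hyp"
proof -
  have "R (m / 2) \<otimes>\<^bsub>BijGroup hyp\<^esub> R 0 \<in> carrier (BijGroup hyp)"
    by (rule monoid.m_closed[OF group.is_monoid[OF group_BijGroup]])
      (simp_all add: carrier_BijGroup R_in_Bij)
  then show ?thesis
    by (simp add: R_mult_R carrier_BijGroup)
qed

lemma T_mult_T: "T a \<otimes>\<^bsub>BijGroup hyp\<^esub> T b = T (a + b)"
  unfolding BijGroup_mult_eq[OF T_in_Bij T_in_Bij]
  by (rule extensionalityI[OF restrict_extensional T_extensional]) (simp add: T_T)

lemma T_mult_R: "T m \<otimes>\<^bsub>BijGroup hyp\<^esub> R c = R (c + m / 2)"
  unfolding BijGroup_mult_eq[OF T_in_Bij R_in_Bij]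
  by (rule extensionalityI[OF restrict_extensional R_extensional]) (simp add: T_R)

lemma R_mult_T: "R c \<otimes>\<^bsub>BijGroup hyp\<^esub> T m = R (c - m / 2)"
  unfolding BijGroup_mult_eq[OF R_in_Bij T_in_Bij]
  by (rule extensionalityI[OF restrict_extensional R_extensional]) (simp add: R_T)

lemma one_BijGroup_eq_T: "\<one>\<^bsub>BijGroup hyp\<^esub> = T 0"
  by (rule extensionalityI[OF _ T_extensional]) (simp_all add: BijGroup_def T_zero)

lemma inv_R: "inv\<^bsub>BijGroup hyp\<^esub> (R c) = R c"
  by (rule group.inv_equality[OF group_BijGroup])
    (simp_all add: R_mult_R one_BijGroup_eq_T carrier_BijGroup R_in_Bij)

lemma inv_T: "inv\<^bsub>BijGroup hyp\<^esub> (T m) = T (- m)"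
  by (rule group.inv_equality[OF group_BijGroup])
    (simp_all add: T_mult_T one_BijGroup_eq_T carrier_BijGroup T_in_Bij)

lemma generate_R_subset: "generate (BijGroup hyp) (R ` C) \<subseteq> range T \<union> range R"
proof
  fix f assume "f \<in> generate (BijGroup hyp) (R ` C)"
  then show "f \<in> range T \<union> range R"
    by induction (auto simp: one_BijGroup_eq_T inv_R R_mult_R T_mult_T T_mult_R R_mult_T)
qed

lemma inj_T: "inj T"
proof
  fix a b assume "T a = T b"
  then have "T (a - b) = T 0"
    using T_mult_T[of a "- b"] T_mult_T[of b "- b"] by simp
  then have "T (a - b) (0, 1) = (0, 1)"
    using T_zero[OF origin_in_hyp] by simp
  then have "a - b = 0"
    by (rule T_fixpoint[OF origin_in_hyp])
  then show "a = b"
    by simp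
qed

lemma inj_R: "inj R"
proof
  fix a b assume "R a = R b"
  then have "T (2 * (a - b)) = T 0"
    using R_mult_R[of a b] R_mult_R[of b b] by simp
  then show "a = b"
    using inj_T by (simp add: inj_eq)
qed

text \<open>A translation is not an involution unless it is trivial, and the identity is no reflection.\<close>
lemma T_neq_R: "T m \<noteq> R c"
proof -
  have trivial: "m = 0" if "T m = R c" for m c
  proof -
    have "T (m + m) = T 0"
      using that T_mult_T[of m m] R_mult_R[of c c] by simp
    then show ?thesis
      using inj_T by (simp add: inj_eq)
  qed
  show ?thesis
  proof
    assume "T m = R c"
    then have "R c = T 0"
      using trivial[OF \<open>T m = R c\<close>] by simp
    then have "T 2 = R (c + 1)"
      using R_mult_R[of "c + 1" c] R_mult_T[of "c + 1" 0] by simp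
    then show False
      using trivial[of 2 "c + 1"] by simp
  qed
qed

lemma translation_gap:
  assumes "discrete_isos D" "T 0 \<in> D"
  obtains \<delta> where "\<delta> > 0" "\<And>a. T a \<in> D \<Longrightarrow> a \<noteq> 0 \<Longrightarrow> \<delta> \<le> \<bar>a\<bar>"
proof -
  have "\<exists>K e. compact K \<and> K \<subseteq> hyp \<and> e > 0 \<and>
      (\<forall>h\<in>D. h \<noteq> T 0 \<longrightarrow> (\<exists>x\<in>K. e \<le> hdist (h x) (T 0 x)))"
    using assms unfolding discrete_isos_def by (rule bspec)
  then obtain K e where K: "compact K" "K \<subseteq> hyp" "e > 0"
    and sep: "\<And>h. h \<in> D \<Longrightarrow> h \<noteq> T 0 \<Longrightarrow> \<exists>x\<in>K. e \<le> hdist (h x) (T 0 x)"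
    by blast
  obtain B where B: "\<And>x. x \<in> K \<Longrightarrow> norm x \<le> B"
    using compact_imp_bounded[OF K(1)] by (auto simp: bounded_iff)
  define M where "M = (2 * B * norm u)\<^sup>2 + 1"
  have M: "M > 0"
    by (simp add: M_def add_nonneg_pos)
  define \<delta> where "\<delta> = sqrt (2 * (cosh e - 1) / M)"
  have "1 < cosh e"
    using cosh_real_nonneg_less_iff[of 0 e] K(3) by simp
  then have "\<delta> > 0"
    using M by (simp add: \<delta>_def)
  moreover have "\<delta> \<le> \<bar>a\<bar>" if Ta: "T a \<in> D" and a: "a \<noteq> 0" for a
  proof -
    have "T a \<noteq> T 0"
      using a by (simp add: inj_eq[OF inj_T])
    then obtain x where x: "x \<in> K" "e \<le> hdist (T a x) (T 0 x)"
      using sep Ta by blast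
    have xh: "x \<in> hyp"
      using x(1) K(2) by blast
    have "cosh e \<le> cosh (hdist (T a x) x)"
      using x(2) T_zero[OF xh] hdist_nonneg[OF T_in_hyp[OF xh] xh] K(3)
      by (simp add: cosh_real_nonneg_le_iff)
    then have "2 * (cosh e - 1) \<le> a\<^sup>2 * (lor x u)\<^sup>2"
      by (simp add: cosh_hdist_T[OF xh])
    also have "\<dots> \<le> a\<^sup>2 * M"
    proof -
      have "\<bar>lor x u\<bar> \<le> 2 * norm x * norm u"
        by (rule abs_lor_le)
      also have "\<dots> \<le> 2 * B * norm u"
        using B[OF x(1)] by (simp add: mult_right_mono)
      finally have "\<bar>lor x u\<bar> \<le> 2 * B * norm u" .
      then have "(lor x u)\<^sup>2 \<le> (2 * B * norm u)\<^sup>2"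
        by (metis abs_ge_zero power2_abs power_mono)
      then show ?thesis
        by (simp add: M_def mult_left_mono)
    qed
    finally have "2 * (cosh e - 1) / M \<le> a\<^sup>2"
      using M by (simp add: pos_divide_le_eq)
    then have "\<delta> \<le> sqrt (a\<^sup>2)"
      unfolding \<delta>_def by (rule real_sqrt_le_mono)
    then show ?thesis
      by simp
  qed
  ultimately show ?thesis
    using that by blast
qed

definition dihedral :: "real \<Rightarrow> real \<Rightarrow> int \<times> int \<Rightarrow> ('a \<times> real \<Rightarrow> 'a \<times> real)" where
  "dihedral c d = (\<lambda>(e, n). if e = 1 then T (of_int n * d) else R (c + of_int n * d / 2))"

lemma dihedral_hom: "dihedral c d \<in> hom DInf (BijGroup hyp)"
proof (rule homI)
  fix x assume "x \<in> carrier DInf"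
  then show "dihedral c d x \<in> carrier (BijGroup hyp)"
    by (auto simp: dihedral_def carrier_BijGroup T_in_Bij R_in_Bij split: prod.splits)
next
  fix x y assume "x \<in> carrier DInf" "y \<in> carrier DInf"
  then show "dihedral c d (x \<otimes>\<^bsub>DInf\<^esub> y) = dihedral c d x \<otimes>\<^bsub>BijGroup hyp\<^esub> dihedral c d y"
    by (auto simp: DInf_def dihedral_def T_mult_T T_mult_R R_mult_T R_mult_R
        algebra_simps add_divide_distrib diff_divide_distrib)
qed

lemma inj_on_dihedral: assumes "d \<noteq> 0" shows "inj_on (dihedral c d) (carrier DInf)"
proof
  fix x y assume "x \<in> carrier DInf" "y \<in> carrier DInf" "dihedral c d x = dihedral c d y"
  then show "x = y"
    using assms T_neq_R T_neq_R[symmetric] by (auto simp: DInf_def dihedral_def inj_eq[OF inj_T] inj_eq[OF inj_R])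
qed

lemma dihedral_image:
  assumes D: "subgroup D (BijGroup hyp)" "D \<subseteq> range T \<union> range R" "R c \<in> D"
    and L: "{m. T m \<in> D} = range (\<lambda>n::int. of_int n * d)"
  shows "dihedral c d ` carrier DInf = D"
proof
  have T: "T (of_int n * d) \<in> D" for n
    using L by auto
  then have "R (c + of_int n * d / 2) \<in> D" for n
    using subgroup.m_closed[OF D(1) T D(3)] by (simp add: T_mult_R)
  then show "dihedral c d ` carrier DInf \<subseteq> D"
    using T by (auto simp: dihedral_def DInf_def)
next
  show "D \<subseteq> dihedral c d ` carrier DInf"
  proof
    fix f assume f: "f \<in> D"
    then consider m where "f = T m" | c' where "f = R c'"
      using D(2) by blast
    then show "f \<in> dihedral c d ` carrier DInf"
    proof cases
      case (1 m)
      then obtain n where "m = of_int n * d"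
        using f L by auto
      then have "f = dihedral c d (1, n)"
        using 1 by (simp add: dihedral_def)
      then show ?thesis
        by (auto simp: DInf_def)
    next
      case (2 c')
      have "R c' \<otimes>\<^bsub>BijGroup hyp\<^esub> R c \<in> D"
        using subgroup.m_closed[OF D(1)] f 2 D(3) by blast
      then obtain n where "2 * (c' - c) = of_int n * d"
        using L by (auto simp: R_mult_R)
      then have "c' = c + of_int n * d / 2"
        by simp
      then have "f = dihedral c d (-1, n)"
        using 2 by (simp add: dihedral_def)
      then show ?thesis
        by (auto simp: DInf_def)
    qed
  qed
qed

lemma subgroup_iso_DInf:
  assumes "subgroup D (BijGroup hyp)" "D \<subseteq> range T \<union> range R" "R c \<in> D"
    and "{m. T m \<in> D} = range (\<lambda>n::int. of_int n * d)" "d \<noteq> 0"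
  shows "(BijGroup hyp)\<lparr>carrier := D\<rparr> \<cong> DInf"
proof -
  have image: "dihedral c d ` carrier DInf = D"
    using dihedral_image assms(1-4) .
  then have "dihedral c d \<in> hom DInf ((BijGroup hyp)\<lparr>carrier := D\<rparr>)"
    using dihedral_hom by (auto simp: hom_def)
  then have "dihedral c d \<in> iso DInf ((BijGroup hyp)\<lparr>carrier := D\<rparr>)"
    using inj_on_dihedral[OF assms(5)] image by (simp add: iso_def bij_betw_def)
  then show ?thesis
    using group.iso_sym[OF group_DInf] by (auto simp: is_iso_def)
qed

theorem reflection_group_iso_DInf:
  assumes "c \<in> C" "c' \<in> C" "c \<noteq> c'" "discrete_isos (generate (BijGroup hyp) (R ` C))"
  shows "(BijGroup hyp)\<lparr>carrier := generate (BijGroup hyp) (R ` C)\<rparr> \<cong> DInf"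
proof -
  define D where "D = generate (BijGroup hyp) (R ` C)"
  have D: "subgroup D (BijGroup hyp)"
    unfolding D_def by (rule group.generate_is_subgroup[OF group_BijGroup]) (auto simp: carrier_BijGroup R_in_Bij)
  have R: "R c \<in> D" "R c' \<in> D"
    using assms(1,2) by (auto simp: D_def intro: generate.incl)
  have T0: "T 0 \<in> D"
    using subgroup.one_closed[OF D] by (simp add: one_BijGroup_eq_T)
  obtain \<delta> where \<delta>: "\<delta> > 0" "\<And>a. T a \<in> D \<Longrightarrow> a \<noteq> 0 \<Longrightarrow> \<delta> \<le> \<bar>a\<bar>"
    using translation_gap assms(4) T0 unfolding D_def by blast
  define L where "L = {m. T m \<in> D}"
  have gap: "\<delta> \<le> \<bar>a\<bar>" if "a \<in> L" "a \<noteq> 0" for a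
    using \<delta>(2) that by (simp add: L_def)
  have diff: "a - b \<in> L" if "a \<in> L" "b \<in> L" for a b
    using subgroup.m_closed[OF D _ subgroup.m_inv_closed[OF D], of "T a" "T b"] that
    by (simp add: L_def inv_T T_mult_T)
  have "2 * (c' - c) \<in> L"
    using subgroup.m_closed[OF D R(2) R(1)] by (simp add: L_def R_mult_R)
  moreover have "2 * (c' - c) \<noteq> 0"
    using assms(3) by simp
  ultimately obtain d where "d \<in> L" "d > 0" "\<And>a. a \<in> L \<Longrightarrow> 0 < a \<Longrightarrow> d \<le> a"
    using discrete_real_subgroup_least_positive[OF diff _ _ \<delta>(1) gap] by blast
  moreover have "L = range (\<lambda>n::int. of_int n * d)"
    using diff calculation by (rule real_subgroup_eq_multiples)
  ultimately show ?thesis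
    using subgroup_iso_DInf[OF D generate_R_subset[of C, folded D_def] R(1)]
    unfolding D_def L_def by simp
qed

end

theorem mainTheorem7:
  fixes k :: nat and v :: "nat \<Rightarrow> ('a::euclidean_space \<times> real)"
  assumes "k \<ge> 3"
    and spacelike: "\<And>i. i < k \<Longrightarrow> lor (v i) (v i) > 0"
    and distinct: "\<And>i j. i < k \<Longrightarrow> j < k \<Longrightarrow> i \<noteq> j \<Longrightarrow> hplane (v i) \<noteq> hplane (v j)"
    and disjoint: "\<And>i j. i < k \<Longrightarrow> j < k \<Longrightarrow> i \<noteq> j \<Longrightarrow> hplane (v i) \<inter> hplane (v j) = {}"
    and ideal: "\<exists>\<xi>. geodesic_ray \<xi> \<and> (\<forall>i<k. has_ideal_point (hplane (v i)) \<xi>)"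
    and discrete: "discrete_isos (refl_group k v)"
  shows "(BijGroup hyp)\<lparr>carrier := refl_group k v\<rparr> \<cong> DInf"
proof -
  obtain \<xi> where "geodesic_ray \<xi>" and \<xi>: "\<forall>i<k. has_ideal_point (hplane (v i)) \<xi>"
    using ideal by blast
  then obtain u where u: "lor u u = 0" "u \<noteq> 0" and uv: "\<And>i. i < k \<Longrightarrow> lor (v i) u = 0"
    using ideal_point_null_vector lor_commute by metis
  have k: "0 < k" "1 < k"
    using \<open>k \<ge> 3\<close> by auto
  define s where "s = sqrt (lor (v 0) (v 0))"
  define w where "w = (1 / s) *\<^sub>R v 0"
  have s: "s \<noteq> 0" "v 0 = s *\<^sub>R w"
    using spacelike[OF k(1)] by (simp_all add: s_def w_def)
  interpret parabolic_frame w u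
    using u uv[OF k(1)] spacelike[OF k(1)] by unfold_locales (simp_all add: w_def s_def lor_commute)
  have "\<exists>c. hrefl (v i) = R c \<and> hplane (v i) = hplane (w + c *\<^sub>R u)" if i: "i < k" for i
  proof (cases "i = 0")
    case True
    then show ?thesis
      using s by (intro exI[of _ 0]) (simp add: R_def hrefl_scaleR hplane_scaleR)
  next
    case False
    have "hplane (v i) \<inter> hplane w = {}"
      using disjoint[OF i k(1) False] s by (simp add: hplane_scaleR)
    then show ?thesis
      using parallel_reflection[OF spacelike[OF i] uv[OF i]] by metis
  qed
  then obtain c where c: "\<And>i. i < k \<Longrightarrow> hrefl (v i) = R (c i) \<and> hplane (v i) = hplane (w + c i *\<^sub>R u)"
    by metis
  have "c 0 \<noteq> c 1"
    using distinct[OF k] c[OF k(1)] c[OF k(2)] by auto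
  moreover have "refl_group k v = generate (BijGroup hyp) (R ` c ` {..<k})"
    unfolding refl_group_def using c by (intro arg_cong[where f = "generate _"]) (auto, metis)
  ultimately show ?thesis
    using reflection_group_iso_DInf[of "c 0" "c ` {..<k}" "c 1"] discrete k by simp
qed

end
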